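(* There exists a decreasing sequence $(\kappa_n)_{n=1}^\infty\subset(0,1/2)$ with $\kappa_n\to0$ such that each $T_{\kappa_n}$ is Markov, and each $\kappa_n$ satisfies $(2+2\kappa_n)^n\kappa_n=1$. Writing $T=T_{\kappa_n}$, a Markov partition for $T$ is, for $n=1$, $\{(-1,-\tfrac12),(-\tfrac12,-\kappa_1),(-\kappa_1,0),(0,\kappa_1),(\kappa_1,\tfrac12),(\tfrac12,1)\}$, and for $n\geq2$ it consists of the intervals $(-1,T(-\kappa_n))$; $(T^i(-\kappa_n),T^{i+1}(-\kappa_n))$ for $1\le i\le n-2$; $(T^{n-1}(-\kappa_n),-\tfrac12)$, $(-\tfrac12,-\kappa_n)$, $(-\kappa_n,0)$, $(0,\kappa_n)$, $(\kappa_n,\tfrac12)$, $(\tfrac12,T^{n-1}(\kappa_n))$; $(T^{i+1}(\kappa_n),T^i(\kappa_n))$ for $1\le i\le n-2$; and $(T(\kappa_n),1)$.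
   Context: For $\kappa\in(0,1/2)$, the paired tent map $T_\kappa:[-1,1]\to[-1,1]$ is $T_\kappa(x)=2(1+\kappa)(x+1)-1$ for $x\in[-1,-1/2]$, $T_\kappa(x)=-2(1+\kappa)x-1$ for $x\in[-1/2,0)$, $T_\kappa(0)=0$, $T_\kappa(x)=-2(1+\kappa)x+1$ for $x\in(0,1/2]$, $T_\kappa(x)=2(1+\kappa)(x-1)+1$ for $x\in[1/2,1]$. A map $T$ of an interval $I$ is Markov if there is a finite collection $\{R_i\}_{i=1}^r$ of disjoint open intervals (a Markov partition) such that $I\setminus\bigcup_iR_i$ is exactly the set of endpoints of the $R_i$, and whenever $R_i\cap T(R_j)\neq\emptyset$, we have $R_i\subset T(R_j)$. *)

theory Defs
  imports "HOL-Analysis.Analysis"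
begin

text \<open>The paired tent map T_kappa on [-1,1] (values outside [-1,1] are irrelevant).\<close>
definition paired_tent :: "real \<Rightarrow> real \<Rightarrow> real" where
  "paired_tent k x =
     (if x \<le> -1/2 then 2*(1+k)*(x+1) - 1
      else if x < 0 then -2*(1+k)*x - 1
      else if x = 0 then 0
      else if x \<le> 1/2 then -2*(1+k)*x + 1
      else 2*(1+k)*(x-1) + 1)"

text \<open>A Markov partition of the interval I for T: a finite collection of disjoint
  nonempty open intervals {a<..<b}, represented by their endpoint pairs (a,b), such that
  I minus their union is exactly the set of their endpoints, and whenever
  R_i meets T(R_j), R_i is contained in T(R_j).\<close>
definition markov_partition :: "(real \<Rightarrow> real) \<Rightarrow> real set \<Rightarrow> (real \<times> real) set \<Rightarrow> bool" where
  "markov_partition T I P \<longleftrightarrow>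
     finite P \<and> P \<noteq> {} \<and>
     (\<forall>(a,b)\<in>P. a < b) \<and>
     (\<forall>p\<in>P. \<forall>q\<in>P. p \<noteq> q \<longrightarrow> {fst p<..<snd p} \<inter> {fst q<..<snd q} = {}) \<and>
     I - (\<Union>(a,b)\<in>P. {a<..<b}) = (\<Union>(a,b)\<in>P. {a, b}) \<and>
     (\<forall>p\<in>P. \<forall>q\<in>P. {fst p<..<snd p} \<inter> T ` {fst q<..<snd q} \<noteq> {}
                \<longrightarrow> {fst p<..<snd p} \<subseteq> T ` {fst q<..<snd q})"

definition is_markov :: "(real \<Rightarrow> real) \<Rightarrow> real set \<Rightarrow> bool" where
  "is_markov T I \<longleftrightarrow> (\<exists>P. markov_partition T I P)"

definition tent_partition :: "real \<Rightarrow> nat \<Rightarrow> (real \<times> real) set" where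
  "tent_partition k n =
    (let T = paired_tent k in
     if n = 1 then
       {(-1, -1/2), (-1/2, -k), (-k, 0), (0, k), (k, 1/2), (1/2, 1)}
     else
       {(-1, T (-k))}
       \<union> {((T ^^ i) (-k), (T ^^ (i+1)) (-k)) | i. 1 \<le> i \<and> i \<le> n - 2}
       \<union> {((T ^^ (n-1)) (-k), -1/2), (-1/2, -k), (-k, 0), (0, k), (k, 1/2),
          (1/2, (T ^^ (n-1)) k)}
       \<union> {((T ^^ (i+1)) k, (T ^^ i) k) | i. 1 \<le> i \<and> i \<le> n - 2}
       \<union> {(T k, 1)})"

end

theory Submission
  imports Defs
begin

text \<open>
  If \<open>(2 + 2\<kappa>)^n \<kappa> = 1\<close>, the orbit of \<open>-\<kappa>\<close> climbs the left branch of \<open>T = T\<^sub>\<kappa>\<close>,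
  \<open>T^i(-\<kappa>) = (2 + 2\<kappa>)^i \<kappa> - 1\<close> for \<open>1 \<le> i \<le> n\<close>, and reaches the fixed point \<open>T^n(-\<kappa>) = 0\<close>.
  The points \<open>-1, T(-\<kappa>), ..., T^(n-1)(-\<kappa>), -1/2, -\<kappa>, 0\<close> and their negatives (\<open>T\<close> is odd)
  cut \<open>[-1, 1]\<close> into open intervals, each lying on one affine branch of \<open>T\<close>, and that branch
  sends both endpoints to points of the same set (besides the orbit relation, \<open>T(-1) = -1\<close>,
  \<open>T(-1/2) = \<kappa>\<close> and \<open>T(0\<^sup>-) = -1\<close>). So each interval is mapped onto a union of intervals,
  which is the Markov property. The solutions \<open>\<kappa>\<^sub>n\<close> exist by the intermediate value theorem,
  decrease because \<open>(2 + 2\<kappa>)^(n+1) \<kappa>\<close> is increasing in \<open>\<kappa>\<close> and equals \<open>2 + 2\<kappa>\<^sub>n > 1\<close>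
  at \<open>\<kappa>\<^sub>n\<close>, and tend to \<open>0\<close> because \<open>2^n \<kappa>\<^sub>n \<le> 1\<close>.
\<close>

lemma image_affinity_greaterThanLessThan:
  fixes m c :: real
  assumes "0 < m"
  shows "(\<lambda>x. m * x + c) ` {a<..<b} = {m * a + c<..<m * b + c}"
  using assms by (auto simp: field_simps intro!: rev_image_eqI[where x="(y - c) / m" for y])

lemma image_affinity_greaterThanLessThan_neg:
  fixes m c :: real
  assumes "m < 0"
  shows "(\<lambda>x. m * x + c) ` {a<..<b} = {m * b + c<..<m * a + c}"
  using assms by (auto simp: field_simps intro!: rev_image_eqI[where x="(y - c) / m" for y])

lemma strict_mono_on_atMostI:
  fixes x :: "nat \<Rightarrow> 'a::order"
  assumes "\<And>j. j < m \<Longrightarrow> x j < x (Suc j)"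
  shows "strict_mono_on {..m} x"
proof (rule strict_mono_onI)
  fix i j assume "i \<in> {..m}" "j \<in> {..m}" "i < j"
  then show "x i < x j"
  proof (induction j)
    case (Suc j)
    then show ?case using assms[of j] by (cases "i = j") (auto dest: order.strict_trans)
  qed simp
qed

lemma Icc_diff_consecutive_Ioo:
  fixes x :: "nat \<Rightarrow> 'a::linorder"
  assumes mono: "strict_mono_on {..m} x"
  shows "{x 0..x m} - (\<Union>j<m. {x j<..<x (Suc j)}) = x ` {..m}"
proof
  show "{x 0..x m} - (\<Union>j<m. {x j<..<x (Suc j)}) \<subseteq> x ` {..m}"
  proof
    fix t assume t: "t \<in> {x 0..x m} - (\<Union>j<m. {x j<..<x (Suc j)})"
    define J where "J = {j. j \<le> m \<and> x j \<le> t}"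
    have "finite J" "0 \<in> J" using t by (auto simp: J_def)
    define j where "j = Max J"
    have "j \<in> J" "\<And>i. i \<in> J \<Longrightarrow> i \<le> j"
      unfolding j_def using \<open>finite J\<close> \<open>0 \<in> J\<close> by (auto intro: Max_in)
    show "t \<in> x ` {..m}"
    proof (cases "j = m")
      case True
      then show ?thesis using \<open>j \<in> J\<close> t by (auto simp: J_def intro!: image_eqI[of _ _ m])
    next
      case False
      then have "j < m" "Suc j \<notin> J" using \<open>j \<in> J\<close> \<open>\<And>i. i \<in> J \<Longrightarrow> i \<le> j\<close>
        by (fastforce simp: J_def)+
      then have "t = x j" using t \<open>j \<in> J\<close> by (auto simp: J_def not_le le_less)
      then show ?thesis using \<open>j < m\<close> by auto
    qed
  qed
  show "x ` {..m} \<subseteq> {x 0..x m} - (\<Union>j<m. {x j<..<x (Suc j)})"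
    using strict_mono_on_less[OF mono] strict_mono_on_less_eq[OF mono]
    by (fastforce simp: not_less_eq)
qed

lemma consecutive_Ioo_disjoint:
  fixes x :: "nat \<Rightarrow> 'a::linorder"
  assumes mono: "strict_mono_on {..m} x" and "i < m" "j < m" "i \<noteq> j"
  shows "{x i<..<x (Suc i)} \<inter> {x j<..<x (Suc j)} = {}"
  using assms strict_mono_on_less_eq[OF mono, of "Suc i" j]
    strict_mono_on_less_eq[OF mono, of "Suc j" i]
  by (cases "i < j") auto

lemma consecutive_Ioo_subset:
  fixes x :: "nat \<Rightarrow> 'a::linorder"
  assumes mono: "strict_mono_on {..m} x" and "i < m" "a \<le> m" "b \<le> m"
    and "{x i<..<x (Suc i)} \<inter> {x a<..<x b} \<noteq> {}"
  shows "{x i<..<x (Suc i)} \<subseteq> {x a<..<x b}"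
proof -
  have "x a < x (Suc i)" "x i < x b" using assms(5) by auto
  then have "a \<le> i" "Suc i \<le> b" using assms(2-4) by (simp_all add: strict_mono_on_less[OF mono])
  then have "x a \<le> x i" "x (Suc i) \<le> x b"
    using assms(2-4) by (simp_all add: strict_mono_on_less_eq[OF mono])
  then show ?thesis by auto
qed

lemma image_diff_atLeastAtMost_nat:
  fixes a b c :: nat
  assumes "a \<le> c" "b \<le> c"
  shows "(\<lambda>i. c - i) ` {a..b} = {c - b..c - a}"
proof
  show "{c - b..c - a} \<subseteq> (\<lambda>i. c - i) ` {a..b}"
  proof
    fix j assume "j \<in> {c - b..c - a}"
    with assms show "j \<in> (\<lambda>i. c - i) ` {a..b}" by (intro image_eqI[of _ _ "c - j"]) auto
  qed
qed auto

lemma UN_consecutive_pairs: "(\<Union>j<Suc m. {x j, x (Suc j)}) = x ` {..Suc m}"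
  by (induction m) (auto simp: lessThan_Suc atMost_Suc)

lemma markov_partition_consecutive_Ioo:
  fixes x :: "nat \<Rightarrow> real"
  assumes mono: "strict_mono_on {..m} x" and "0 < m"
    and image: "\<And>j. j < m \<Longrightarrow> \<exists>u\<in>x ` {..m}. \<exists>v\<in>x ` {..m}. T ` {x j<..<x (Suc j)} = {u<..<v}"
  shows "markov_partition T {x 0..x m} ((\<lambda>j. (x j, x (Suc j))) ` {..<m})"
    (is "markov_partition _ _ ?P")
proof -
  have endpoints: "(\<Union>j<m. {x j, x (Suc j)}) = x ` {..m}"
    using \<open>0 < m\<close> UN_consecutive_pairs[of x "m - 1"] by simp
  have markov: "{x j<..<x (Suc j)} \<subseteq> T ` {x i<..<x (Suc i)}"
    if "i < m" "j < m" "{x j<..<x (Suc j)} \<inter> T ` {x i<..<x (Suc i)} \<noteq> {}" for i j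
  proof -
    obtain a b where "a \<le> m" "b \<le> m" "T ` {x i<..<x (Suc i)} = {x a<..<x b}"
      using image[OF \<open>i < m\<close>] by blast
    then show ?thesis using consecutive_Ioo_subset[OF mono \<open>j < m\<close>, of a b] that(3) by simp
  qed
  show ?thesis
    unfolding markov_partition_def
  proof (intro conjI)
    show "finite ?P" "?P \<noteq> {}" using \<open>0 < m\<close> by auto
    show "\<forall>(a, b)\<in>?P. a < b" using strict_mono_onD[OF mono] by auto
    show "\<forall>p\<in>?P. \<forall>q\<in>?P. p \<noteq> q \<longrightarrow> {fst p<..<snd p} \<inter> {fst q<..<snd q} = {}"
      using consecutive_Ioo_disjoint[OF mono] by auto
    show "{x 0..x m} - (\<Union>(a, b)\<in>?P. {a<..<b}) = (\<Union>(a, b)\<in>?P. {a, b})"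
      using Icc_diff_consecutive_Ioo[OF mono] endpoints by simp
    show "\<forall>p\<in>?P. \<forall>q\<in>?P. {fst p<..<snd p} \<inter> T ` {fst q<..<snd q} \<noteq> {}
        \<longrightarrow> {fst p<..<snd p} \<subseteq> T ` {fst q<..<snd q}"
      using markov by auto
  qed
qed

lemma paired_tent_minus: "paired_tent k (- x) = - paired_tent k x"
  by (cases "x = -1/2") (auto simp: paired_tent_def algebra_simps)

lemma funpow_paired_tent_minus: "(paired_tent k ^^ i) (- x) = - (paired_tent k ^^ i) x"
  by (induction i) (simp_all add: paired_tent_minus)

lemma image_paired_tent_uminus: "paired_tent k ` (uminus ` A) = uminus ` paired_tent k ` A"
  by (simp add: image_image paired_tent_minus)

lemma paired_tent_left: "x \<le> -1/2 \<Longrightarrow> paired_tent k x = (2+2*k) * x + (1+2*k)"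
  by (auto simp: paired_tent_def algebra_simps)

lemma paired_tent_middle: "-1/2 < x \<Longrightarrow> x < 0 \<Longrightarrow> paired_tent k x = (-(2+2*k)) * x + (-1)"
  by (simp add: paired_tent_def)

text \<open>
  \<open>partition_point k n\<close> lists the \<open>2n + 5\<close> endpoints of \<open>tent_partition k n\<close> in increasing
  order: \<open>left_point k n\<close> gives \<open>-1, T(-k), ..., T^(n-1)(-k), -1/2, -k, 0\<close>, with the orbit
  written in the closed form \<open>T^j(-k) = (2+2k)^j k - 1\<close>, and the remaining points are their
  negatives in reverse order.
\<close>

definition left_point :: "real \<Rightarrow> nat \<Rightarrow> nat \<Rightarrow> real" where
  "left_point k n j =
     (if j = 0 then -1 else if j < n then (2+2*k)^j * k - 1
      else if j = n then -1/2 else if j = n+1 then -k else 0)"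

definition partition_point :: "real \<Rightarrow> nat \<Rightarrow> nat \<Rightarrow> real" where
  "partition_point k n j =
     (if j \<le> n+2 then left_point k n j else - left_point k n (2*n+4-j))"

definition partition_interval :: "real \<Rightarrow> nat \<Rightarrow> nat \<Rightarrow> real \<times> real" where
  "partition_interval k n j = (partition_point k n j, partition_point k n (Suc j))"

context
  fixes k :: real and n :: nat
  assumes kappa_pos: "0 < k" and kappa_less_half: "k < 1/2" and n_pos: "1 \<le> n"
    and kappa_eq: "(2+2*k)^n * k = 1"
begin

lemma orbit_less_half:
  assumes "j < n"
  shows "(2+2*k)^j * k < 1/2"
proof -
  have "(2+2*k)^Suc j * k \<le> (2+2*k)^n * k"
    using assms kappa_pos by (intro mult_right_mono power_increasing) auto
  then have "(2+2*k) * ((2+2*k)^j * k) \<le> 1" using kappa_eq by simp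
  moreover have "0 < k * ((2+2*k)^j * k)" using kappa_pos by simp
  ultimately show ?thesis by (simp add: algebra_simps)
qed

lemma funpow_paired_tent_minus_kappa:
  assumes "1 \<le> i" "i \<le> n"
  shows "(paired_tent k ^^ i) (-k) = (2+2*k)^i * k - 1"
  using assms
proof (induction i rule: dec_induct)
  case base
  show ?case using kappa_pos kappa_less_half by (simp add: paired_tent_middle algebra_simps)
next
  case (step m)
  have "(2+2*k)^m * k - 1 \<le> -1/2" using orbit_less_half[of m] step by simp
  then have "paired_tent k ((2+2*k)^m * k - 1) = (2+2*k)^Suc m * k - 1"
    by (simp add: paired_tent_left algebra_simps)
  then show ?case using step by simp
qed

lemma left_point_le_half: "j \<le> n \<Longrightarrow> left_point k n j \<le> -1/2"
  using orbit_less_half[of j] by (auto simp: left_point_def)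

lemma left_point_less_Suc: "j < n+2 \<Longrightarrow> left_point k n j < left_point k n (Suc j)"
  using kappa_pos kappa_less_half orbit_less_half[of j]
  by (auto simp: left_point_def mult_less_cancel_right)

lemma partition_point_left: "j \<le> n+2 \<Longrightarrow> partition_point k n j = left_point k n j"
  by (simp add: partition_point_def)

lemma partition_point_reflect:
  "j \<le> 2*n+4 \<Longrightarrow> partition_point k n (2*n+4-j) = - partition_point k n j"
  by (auto simp: partition_point_def left_point_def)

lemma partition_point_strict_mono: "strict_mono_on {..2*n+4} (partition_point k n)"
proof (rule strict_mono_on_atMostI)
  fix j assume "j < 2*n+4"
  then consider "j < n+2" | "j = n+2" | "n+2 < j" by linarith
  then show "partition_point k n j < partition_point k n (Suc j)"
  proof cases
    case 3
    with \<open>j < 2*n+4\<close> have "Suc (2*n+4 - Suc j) = 2*n+4 - j" by simp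
    moreover have "left_point k n (2*n+4 - Suc j) < left_point k n (Suc (2*n+4 - Suc j))"
      using 3 \<open>j < 2*n+4\<close> by (intro left_point_less_Suc) auto
    ultimately show ?thesis using 3 by (simp add: partition_point_def)
  qed (use kappa_pos left_point_less_Suc in \<open>auto simp: partition_point_def left_point_def\<close>)
qed

lemma orbit_in_points:
  assumes "1 \<le> i" "i \<le> n"
  shows "(2+2*k)^i * k - 1 \<in> partition_point k n ` {..2*n+4}"
proof (cases "i = n")
  case True
  then have "(2+2*k)^i * k - 1 = partition_point k n (n+2)"
    using kappa_eq by (simp add: partition_point_def left_point_def)
  then show ?thesis by auto
next
  case False
  then have "(2+2*k)^i * k - 1 = partition_point k n i"
    using assms by (simp add: partition_point_def left_point_def)
  then show ?thesis using assms by auto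
qed

lemma uminus_in_points:
  assumes "v \<in> partition_point k n ` {..2*n+4}"
  shows "- v \<in> partition_point k n ` {..2*n+4}"
proof -
  obtain j where "j \<le> 2*n+4" "v = partition_point k n j" using assms by auto
  then have "- v = partition_point k n (2*n+4-j)" by (simp add: partition_point_reflect)
  then show ?thesis by auto
qed

lemma left_branch_image_in_points:
  assumes "j \<le> n"
  shows "(2+2*k) * partition_point k n j + (1+2*k) \<in> partition_point k n ` {..2*n+4}"
proof -
  consider "j = 0" | "0 < j" "j < n" | "j = n" using assms by linarith
  then show ?thesis
  proof cases
    case 1
    then have "(2+2*k) * partition_point k n j + (1+2*k) = partition_point k n 0"
      by (simp add: partition_point_def left_point_def)
    then show ?thesis by auto
  next
    case 2
    then have "(2+2*k) * partition_point k n j + (1+2*k) = (2+2*k)^Suc j * k - 1"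
      by (simp add: partition_point_def left_point_def algebra_simps)
    then show ?thesis using 2 orbit_in_points[of "Suc j"] by (simp only:)
  next
    case 3
    then have "(2+2*k) * partition_point k n j + (1+2*k) = partition_point k n (n+3)"
      using n_pos by (simp add: partition_point_def left_point_def algebra_simps)
    then show ?thesis by auto
  qed
qed

lemma image_left_interval:
  assumes "j < n+2"
  shows "\<exists>u\<in>partition_point k n ` {..2*n+4}. \<exists>v\<in>partition_point k n ` {..2*n+4}.
           paired_tent k ` {partition_point k n j<..<partition_point k n (Suc j)} = {u<..<v}"
proof -
  let ?x = "partition_point k n"
  consider "j < n" | "j = n" | "j = n+1" using assms by linarith
  then show ?thesis
  proof cases
    case 1
    have "?x (Suc j) \<le> -1/2" using 1 left_point_le_half by (simp add: partition_point_left)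
    then have "paired_tent k ` {?x j<..<?x (Suc j)}
        = (\<lambda>t. (2+2*k) * t + (1+2*k)) ` {?x j<..<?x (Suc j)}"
      by (intro image_cong) (auto simp: paired_tent_left)
    also have "\<dots> = {(2+2*k) * ?x j + (1+2*k)<..<(2+2*k) * ?x (Suc j) + (1+2*k)}"
      using kappa_pos by (intro image_affinity_greaterThanLessThan) simp
    finally show ?thesis
      using 1 left_branch_image_in_points[of j] left_branch_image_in_points[of "Suc j"] by fastforce
  next
    case 2
    then have "paired_tent k ` {?x j<..<?x (Suc j)} = (\<lambda>t. (-(2+2*k)) * t + (-1)) ` {-1/2<..<-k}"
      using kappa_pos kappa_less_half n_pos
      by (intro image_cong) (auto simp: paired_tent_middle partition_point_def left_point_def)
    also have "\<dots> = {(2+2*k)^1 * k - 1<..<?x (n+3)}"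
      using kappa_pos by (subst image_affinity_greaterThanLessThan_neg)
        (auto simp: partition_point_def left_point_def algebra_simps)
    finally show ?thesis using n_pos orbit_in_points[of 1] by fastforce
  next
    case 3
    then have "paired_tent k ` {?x j<..<?x (Suc j)} = (\<lambda>t. (-(2+2*k)) * t + (-1)) ` {-k<..<0}"
      using kappa_pos kappa_less_half
      by (intro image_cong) (auto simp: paired_tent_middle partition_point_def left_point_def)
    also have "\<dots> = {?x 0<..<(2+2*k)^1 * k - 1}"
      using kappa_pos by (subst image_affinity_greaterThanLessThan_neg)
        (auto simp: partition_point_def left_point_def algebra_simps)
    finally show ?thesis using n_pos orbit_in_points[of 1] by fastforce
  qed
qed

lemma image_partition_interval:
  assumes "j < 2*n+4"
  shows "\<exists>u\<in>partition_point k n ` {..2*n+4}. \<exists>v\<in>partition_point k n ` {..2*n+4}.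
           paired_tent k ` {partition_point k n j<..<partition_point k n (Suc j)} = {u<..<v}"
proof (cases "j < n+2")
  case False
  let ?x = "partition_point k n"
  define i where "i = 2*n+3-j"
  have i: "Suc i = 2*n+4-j" "i = 2*n+4 - Suc j" using False assms by (auto simp: i_def)
  have "?x (Suc i) = - ?x j" unfolding i(1) using assms by (simp add: partition_point_reflect)
  moreover have "?x i = - ?x (Suc j)"
    unfolding i(2) using assms partition_point_reflect[of "Suc j"] by simp
  moreover have "i < n+2" using False by (simp add: i_def)
  moreover obtain u v where "u \<in> ?x ` {..2*n+4}" "v \<in> ?x ` {..2*n+4}"
    "paired_tent k ` {?x i<..<?x (Suc i)} = {u<..<v}"
    using image_left_interval[OF \<open>i < n+2\<close>] by blast
  ultimately have "paired_tent k ` {?x j<..<?x (Suc j)} = {-v<..<-u}"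
    using image_paired_tent_uminus[of k "{?x i<..<?x (Suc i)}"] by simp
  moreover have "-v \<in> ?x ` {..2*n+4}" "-u \<in> ?x ` {..2*n+4}"
    using uminus_in_points \<open>u \<in> _\<close> \<open>v \<in> _\<close> by blast+
  ultimately show ?thesis by blast
qed (use image_left_interval in blast)

lemma funpow_paired_tent_kappa:
  assumes "1 \<le> i" "i < n"
  shows "(paired_tent k ^^ i) (-k) = partition_point k n i"
    and "(paired_tent k ^^ i) k = partition_point k n (2*n+4-i)"
proof -
  show *: "(paired_tent k ^^ i) (-k) = partition_point k n i"
    using assms funpow_paired_tent_minus_kappa[of i]
    by (simp add: partition_point_def left_point_def)
  show "(paired_tent k ^^ i) k = partition_point k n (2*n+4-i)"
    using assms * funpow_paired_tent_minus[of i k k] partition_point_reflect[of i] by simp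
qed

lemma tent_partition_orbit_minus_kappa:
  "{((paired_tent k ^^ i) (-k), (paired_tent k ^^ (i+1)) (-k)) | i. 1 \<le> i \<and> i \<le> n-2}
     = partition_interval k n ` {1..n-2}"
  unfolding setcompr_eq_image
proof (rule image_cong)
  fix i assume "i \<in> {1..n-2}"
  then have "1 \<le> i" "i+1 < n" by auto
  then show "((paired_tent k ^^ i) (-k), (paired_tent k ^^ (i+1)) (-k)) = partition_interval k n i"
    using funpow_paired_tent_kappa(1)[of i] funpow_paired_tent_kappa(1)[of "i+1"]
    by (simp del: funpow.simps add: partition_interval_def)
qed auto

lemma tent_partition_orbit_kappa:
  assumes "2 \<le> n"
  shows "{((paired_tent k ^^ (i+1)) k, (paired_tent k ^^ i) k) | i. 1 \<le> i \<and> i \<le> n-2}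
     = partition_interval k n ` {n+5..2*n+2}"
proof -
  have "{((paired_tent k ^^ (i+1)) k, (paired_tent k ^^ i) k) | i. 1 \<le> i \<and> i \<le> n-2}
      = partition_interval k n ` (\<lambda>i. 2*n+3-i) ` {1..n-2}"
    unfolding setcompr_eq_image image_image
  proof (rule image_cong)
    fix i assume "i \<in> {1..n-2}"
    then have "1 \<le> i" "i+1 < n" by auto
    moreover have "2*n+4 - (i+1) = 2*n+3-i" "Suc (2*n+3-i) = 2*n+4-i" using \<open>i+1 < n\<close> by auto
    ultimately show "((paired_tent k ^^ (i+1)) k, (paired_tent k ^^ i) k)
        = partition_interval k n (2*n+3-i)"
      using funpow_paired_tent_kappa(2)[of i] funpow_paired_tent_kappa(2)[of "i+1"]
      by (simp only: partition_interval_def)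
  qed auto
  also have "(\<lambda>i. 2*n+3-i) ` {1..n-2} = {n+5..2*n+2}"
    using assms by (simp add: image_diff_atLeastAtMost_nat)
  finally show ?thesis .
qed

lemma tent_partition_middle:
  assumes "2 \<le> n"
  shows "{((paired_tent k ^^ (n-1)) (-k), -1/2), (-1/2, -k), (-k, 0), (0, k), (k, 1/2),
      (1/2, (paired_tent k ^^ (n-1)) k)} = partition_interval k n ` {n-1..n+4}"
proof -
  let ?x = "partition_point k n"
  have "1 \<le> n-1" "n-1 < n" and n_minus_1: "Suc (n-1) = n" "Suc (n+4) = 2*n+4 - (n-1)"
    using assms by auto
  have x_middle: "?x n = -1/2" "?x (n+4) = 1/2"
    using n_pos by (simp_all add: partition_point_def left_point_def)
  have "partition_interval k n (n-1) = ((paired_tent k ^^ (n-1)) (-k), -1/2)"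
    "partition_interval k n (n+4) = (1/2, (paired_tent k ^^ (n-1)) k)"
    using funpow_paired_tent_kappa[OF \<open>1 \<le> n-1\<close> \<open>n-1 < n\<close>]
    by (simp_all only: partition_interval_def n_minus_1 x_middle)
  moreover have "partition_interval k n n = (-1/2, -k)" "partition_interval k n (n+1) = (-k, 0)"
    "partition_interval k n (n+2) = (0, k)" "partition_interval k n (n+3) = (k, 1/2)"
    using n_pos by (simp_all add: partition_interval_def partition_point_def left_point_def)
  moreover have "{n-1..n+4} = {n-1, n, n+1, n+2, n+3, n+4}" using assms by auto
  ultimately show ?thesis by simp
qed

lemma tent_partition_eq: "tent_partition k n = partition_interval k n ` {..<2*n+4}"
proof (cases "n = 1")
  case True
  then have "{..<2*n+4} = {0, 1, 2, 3, 4, 5}" by auto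
  with True show ?thesis
    by (simp add: tent_partition_def partition_interval_def partition_point_def left_point_def
        insert_commute)
next
  case False
  then have "2 \<le> n" using n_pos by simp
  let ?I = "partition_interval k n"
  have ends: "(-1, paired_tent k (-k)) = ?I 0" "(paired_tent k k, 1) = ?I (2*n+3)"
    using \<open>2 \<le> n\<close> funpow_paired_tent_kappa[of 1]
    by (simp_all add: partition_interval_def partition_point_def left_point_def)
  have "tent_partition k n
      = {?I 0} \<union> ?I ` {1..n-2} \<union> ?I ` {n-1..n+4} \<union> ?I ` {n+5..2*n+2} \<union> {?I (2*n+3)}"
    unfolding tent_partition_def Let_def if_not_P[OF False] ends tent_partition_orbit_minus_kappa
      tent_partition_orbit_kappa[OF \<open>2 \<le> n\<close>] tent_partition_middle[OF \<open>2 \<le> n\<close>] ..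
  also have "\<dots> = ?I ` ({0} \<union> {1..n-2} \<union> {n-1..n+4} \<union> {n+5..2*n+2} \<union> {2*n+3})"
    by (simp only: image_Un image_insert image_empty)
  also have "{0} \<union> {1..n-2} \<union> {n-1..n+4} \<union> {n+5..2*n+2} \<union> {2*n+3} = {..<2*n+4}"
    using \<open>2 \<le> n\<close> by auto
  finally show ?thesis .
qed

lemma markov_partition_tent_partition:
  "markov_partition (paired_tent k) {-1..1} (tent_partition k n)"
proof -
  have "partition_point k n 0 = -1" "partition_point k n (2*n+4) = 1"
    by (simp_all add: partition_point_def left_point_def)
  then show ?thesis
    using markov_partition_consecutive_Ioo[OF partition_point_strict_mono _
        image_partition_interval]
    by (simp add: tent_partition_eq partition_interval_def)
qed

end

definition tent_kappa :: "nat \<Rightarrow> real" where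
  "tent_kappa n = (SOME k. 0 < k \<and> k < 1/2 \<and> (2+2*k)^n * k = 1)"

lemma tent_kappa_exists:
  assumes "1 \<le> n"
  shows "\<exists>k::real. 0 < k \<and> k < 1/2 \<and> (2+2*k)^n * k = 1"
proof -
  let ?g = "\<lambda>k::real. (2+2*k)^n * k"
  have "(3::real)^1 \<le> 3^n" using assms by (intro power_increasing) auto
  then have "1 < ?g (1/2)" by simp
  moreover have "continuous_on {0..1/2} ?g" by (intro continuous_intros)
  ultimately obtain k where k: "0 \<le> k" "k \<le> 1/2" "?g k = 1"
    using IVT'[of ?g 0 1 "1/2"] by auto
  moreover have "k \<noteq> 1/2" using k(3) \<open>1 < ?g (1/2)\<close> by (metis less_irrefl)
  moreover have "k \<noteq> 0" using k(3) by auto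
  ultimately show ?thesis by (intro exI[of _ k]) auto
qed

lemma tent_kappa:
  assumes "1 \<le> n"
  shows "0 < tent_kappa n" "tent_kappa n < 1/2" "(2 + 2 * tent_kappa n)^n * tent_kappa n = 1"
  using someI_ex[OF tent_kappa_exists[OF assms]] unfolding tent_kappa_def by auto

lemma tent_kappa_Suc_less:
  assumes "1 \<le> n"
  shows "tent_kappa (Suc n) < tent_kappa n"
proof (rule ccontr)
  let ?a = "tent_kappa n" and ?b = "tent_kappa (Suc n)"
  assume "\<not> ?b < ?a"
  then have "(2+2*?a)^Suc n * ?a \<le> (2+2*?b)^Suc n * ?b"
    using tent_kappa(1)[OF assms] by (intro mult_mono power_mono) auto
  also have "\<dots> = 1" using tent_kappa(3)[of "Suc n"] assms by simp
  finally have "(2+2*?a) * ((2+2*?a)^n * ?a) \<le> 1" by (simp add: mult.assoc)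
  then show False using tent_kappa[OF assms] by simp
qed

lemma tent_kappa_le:
  assumes "1 \<le> n"
  shows "tent_kappa n \<le> (1/2)^n"
proof -
  have "2^n * tent_kappa n \<le> (2 + 2 * tent_kappa n)^n * tent_kappa n"
    using tent_kappa(1)[OF assms] by (intro mult_right_mono power_mono) auto
  then show ?thesis using tent_kappa(3)[OF assms] by (simp add: field_simps)
qed

lemma tendsto_tent_kappa: "tent_kappa \<longlonglongrightarrow> 0"
proof (rule tendsto_sandwich[of "\<lambda>_. 0" _ _ "\<lambda>n. (1/2)^n"])
  show "\<forall>\<^sub>F n in sequentially. 0 \<le> tent_kappa n"
    using eventually_ge_at_top[of 1] by eventually_elim (simp add: less_imp_le tent_kappa)
  show "\<forall>\<^sub>F n in sequentially. tent_kappa n \<le> (1/2)^n"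
    using eventually_ge_at_top[of 1] by eventually_elim (rule tent_kappa_le)
qed (auto intro: LIMSEQ_power_zero)

theorem lemma4:
  shows "\<exists>\<kappa> :: nat \<Rightarrow> real.
     (\<forall>n\<ge>1. 0 < \<kappa> n \<and> \<kappa> n < 1/2) \<and>
     (\<forall>n\<ge>1. \<kappa> (Suc n) < \<kappa> n) \<and>
     \<kappa> \<longlonglongrightarrow> 0 \<and>
     (\<forall>n\<ge>1. is_markov (paired_tent (\<kappa> n)) {-1..1}) \<and>
     (\<forall>n\<ge>1. (2 + 2 * \<kappa> n) ^ n * \<kappa> n = 1) \<and>
     (\<forall>n\<ge>1. markov_partition (paired_tent (\<kappa> n)) {-1..1} (tent_partition (\<kappa> n) n))"
proof -
  have "markov_partition (paired_tent (tent_kappa n)) {-1..1} (tent_partition (tent_kappa n) n)"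
    if "1 \<le> n" for n
    using tent_kappa[OF that] that by (intro markov_partition_tent_partition)
  then show ?thesis
    using tent_kappa tent_kappa_Suc_less tendsto_tent_kappa unfolding is_markov_def
    by (intro exI[of _ tent_kappa]) blast
qed

end
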